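(* Let $G$ be a graph, $C\subseteq V(G)$, $\mathcal{B}=\{N_G[v]: v\in C\}$, and $k$ a positive integer. Let $X\subseteq V(G)$ and let $A=\{A_1,\ldots,A_\ell\}$ be a subset of the connected components of $G-X$ with $\max_{i\in[\ell]}|V(A_i)|=t$. If $\ell>(|X|+t)\cdot 2^{(|X|+t)^2}\cdot 2^{2t+|X|+1}$, then there exists $i\in[\ell]$ such that, with $G'=G-V(A_i)$ and $\mathcal{B}'=\{N_{G'}[v]: v\in C\setminus V(A_i)\}$, we have NCTD$^+(\mathcal{B})\le k$ if and only if NCTD$^+(\mathcal{B}')\le k$ (in $G'$).
   Context: $N_G[v]$ is the closed neighborhood of $v$ in $G$. A positive teaching map for a set $\mathcal{B}$ of closed neighborhoods assigns to each $B\in\mathcal{B}$ a set $T(B)\subseteq B$. A vertex $w$ distinguishes $B,B'$ if $w$ lies in exactly one of $B,B'$. $T$ is non-clashing if for all distinct $B,B'\in\mathcal{B}$ some $w\in T(B)\cup T(B')$ distinguishes $B$ and $B'$; its size is $\max_{B\in\mathcal{B}}|T(B)|$. NCTD$^+(\mathcal{B})$ is the minimum size of a positive non-clashing teaching map for $\mathcal{B}$. $[\ell]=\{1,\ldots,\ell\}$. *)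

theory Defs
  imports Main
begin

definition simple_graph :: "'a set \<Rightarrow> ('a \<Rightarrow> 'a \<Rightarrow> bool) \<Rightarrow> bool" where
  "simple_graph V E \<longleftrightarrow> finite V \<and> (\<forall>u v. E u v \<longrightarrow> u \<in> V \<and> v \<in> V)
     \<and> (\<forall>u v. E u v \<longrightarrow> E v u) \<and> (\<forall>v. \<not> E v v)"

definition closed_nbhd :: "'a set \<Rightarrow> ('a \<Rightarrow> 'a \<Rightarrow> bool) \<Rightarrow> 'a \<Rightarrow> 'a set" where
  "closed_nbhd S E v = insert v {u \<in> S. E u v}"

definition reach_in :: "'a set \<Rightarrow> ('a \<Rightarrow> 'a \<Rightarrow> bool) \<Rightarrow> 'a \<Rightarrow> 'a \<Rightarrow> bool" where
  "reach_in S E = (\<lambda>u w. u \<in> S \<and> w \<in> S \<and> E u w)\<^sup>*\<^sup>*"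

definition components_of :: "'a set \<Rightarrow> ('a \<Rightarrow> 'a \<Rightarrow> bool) \<Rightarrow> 'a set set" where
  "components_of S E = {{w. reach_in S E v w} | v. v \<in> S}"

definition non_clashing_pos :: "'a set set \<Rightarrow> ('a set \<Rightarrow> 'a set) \<Rightarrow> bool" where
  "non_clashing_pos \<B> T \<longleftrightarrow> (\<forall>B\<in>\<B>. T B \<subseteq> B) \<and>
     (\<forall>B\<in>\<B>. \<forall>B'\<in>\<B>. B \<noteq> B' \<longrightarrow> (\<exists>w\<in>T B \<union> T B'. (w \<in> B) \<noteq> (w \<in> B')))"

definition NCTD_pos :: "'a set set \<Rightarrow> nat" where
  "NCTD_pos \<B> = (LEAST k. \<exists>T. non_clashing_pos \<B> T \<and> (\<forall>B\<in>\<B>. card (T B) \<le> k))"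

end

theory Submission
  imports Defs "HOL-Library.FuncSet"
begin

text \<open>
  Call two components of \<open>G - X\<close> twins if an involutive automorphism of \<open>G\<close> exchanges them,
  fixes every other vertex and maps \<open>C\<close> onto itself. A component is determined up to this
  relation by its code (size, internal adjacency, adjacency to \<open>X\<close> and intersection with \<open>C\<close>,
  read along an enumeration), and components of size at most \<open>t\<close> have at most
  \<open>t 2^(t^2) 2^(t |X|) 2^t\<close> codes. By pigeonhole, more than \<open>2|X| + t + 1\<close> of the given
  components are pairwise twins; with at least three twins, removing a twin \<open>A\<close> never identifies
  two distinct neighbourhoods.

  Given a teaching map of the whole family, choose \<open>A\<close> such that every vertex of \<open>X\<close> whose
  teaching set meets \<open>A\<close> has a teaching set meeting at least three twins (at most \<open>2|X|\<close> twins
  fail this), and move the teaching vertices inside \<open>A\<close> to a twin \<open>D\<close> along the swap.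
  Conversely, a teaching map of the reduced family is extended to \<open>C \<inter> A\<close> by pulling back the
  teaching sets of the swapped vertices in a twin \<open>D\<close>, chosen so that none of these sets lies
  inside \<open>X\<close>; each vertex of \<open>A\<close> excludes at most one twin, and \<open>|A| \<le> t\<close>.
\<close>

lemma closed_nbhd_Diff: "v \<notin> A \<Longrightarrow> closed_nbhd (S - A) E v = closed_nbhd S E v - A"
  unfolding closed_nbhd_def by auto

lemma finite_closed_nbhd: "finite S \<Longrightarrow> finite (closed_nbhd S E v)"
  unfolding closed_nbhd_def by simp

lemma closed_nbhd_self: "v \<in> closed_nbhd S E v"
  unfolding closed_nbhd_def by simp

text \<open>Teaching maps for \<open>B ` C\<close> indexed by the vertices in \<open>C\<close> rather than by the sets, so that
  they can be transported along automorphisms; by \<open>teachable_iff_non_clashing_pos\<close> nothing is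
  lost.\<close>

definition nc_teaching :: "('v \<Rightarrow> 'a set) \<Rightarrow> 'v set \<Rightarrow> ('v \<Rightarrow> 'a set) \<Rightarrow> bool" where
  "nc_teaching B C \<tau> \<longleftrightarrow> (\<forall>v\<in>C. \<tau> v \<subseteq> B v) \<and>
     (\<forall>v\<in>C. \<forall>v'\<in>C. B v \<noteq> B v' \<longrightarrow> (\<exists>w\<in>\<tau> v \<union> \<tau> v'. (w \<in> B v) \<noteq> (w \<in> B v')))"

definition teachable :: "('v \<Rightarrow> 'a set) \<Rightarrow> 'v set \<Rightarrow> nat \<Rightarrow> bool" where
  "teachable B C k \<longleftrightarrow> (\<exists>\<tau>. nc_teaching B C \<tau> \<and> (\<forall>v\<in>C. card (\<tau> v) \<le> k))"

lemma nc_teachingD: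
  assumes "nc_teaching B C \<tau>" "v \<in> C" "v' \<in> C" "B v \<noteq> B v'"
  shows "\<exists>w\<in>\<tau> v \<union> \<tau> v'. (w \<in> B v) \<noteq> (w \<in> B v')"
  using assms unfolding nc_teaching_def by blast

lemma nc_teaching_subset: "nc_teaching B C \<tau> \<Longrightarrow> v \<in> C \<Longrightarrow> \<tau> v \<subseteq> B v"
  unfolding nc_teaching_def by blast

lemma NCTD_pos_le_iff:
  assumes "finite \<B>" "\<forall>B\<in>\<B>. finite B"
  shows "NCTD_pos \<B> \<le> k \<longleftrightarrow> (\<exists>T. non_clashing_pos \<B> T \<and> (\<forall>B\<in>\<B>. card (T B) \<le> k))"
    (is "_ \<longleftrightarrow> ?P k")
proof
  have "non_clashing_pos \<B> id"
    unfolding non_clashing_pos_def by auto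
  moreover have "\<forall>B\<in>\<B>. card (id B) \<le> (\<Sum>B\<in>\<B>. card B)"
    using assms by (auto intro: member_le_sum)
  ultimately have "?P (\<Sum>B\<in>\<B>. card B)" by blast
  then have "?P (NCTD_pos \<B>)"
    unfolding NCTD_pos_def by (rule LeastI)
  then show "NCTD_pos \<B> \<le> k \<Longrightarrow> ?P k" by (meson order_trans)
next
  show "?P k \<Longrightarrow> NCTD_pos \<B> \<le> k"
    unfolding NCTD_pos_def by (rule Least_le)
qed

lemma teachable_iff_non_clashing_pos:
  "teachable B C k \<longleftrightarrow> (\<exists>T. non_clashing_pos (B ` C) T \<and> (\<forall>b\<in>B ` C. card (T b) \<le> k))"
proof
  assume "teachable B C k"
  then obtain \<tau> where \<tau>: "nc_teaching B C \<tau>" "\<forall>v\<in>C. card (\<tau> v) \<le> k"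
    unfolding teachable_def by blast
  define rep where "rep b = (SOME v. v \<in> C \<and> B v = b)" for b
  have rep: "rep b \<in> C" "B (rep b) = b" if "b \<in> B ` C" for b
    using someI_ex[of "\<lambda>v. v \<in> C \<and> B v = b"] that unfolding rep_def by blast+
  have "non_clashing_pos (B ` C) (\<tau> \<circ> rep)"
    unfolding non_clashing_pos_def
  proof (intro conjI ballI impI)
    fix b assume "b \<in> B ` C"
    then show "(\<tau> \<circ> rep) b \<subseteq> b"
      using rep nc_teaching_subset[OF \<tau>(1)] by (metis comp_apply)
  next
    fix b b' assume b: "b \<in> B ` C" "b' \<in> B ` C" "b \<noteq> b'"
    then show "\<exists>w\<in>(\<tau> \<circ> rep) b \<union> (\<tau> \<circ> rep) b'. (w \<in> b) \<noteq> (w \<in> b')"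
      using nc_teachingD[OF \<tau>(1) rep(1)[OF b(1)] rep(1)[OF b(2)]] rep(2) by auto
  qed
  moreover have "\<forall>b\<in>B ` C. card ((\<tau> \<circ> rep) b) \<le> k"
    using rep \<tau>(2) by auto
  ultimately show "\<exists>T. non_clashing_pos (B ` C) T \<and> (\<forall>b\<in>B ` C. card (T b) \<le> k)" by blast
next
  assume "\<exists>T. non_clashing_pos (B ` C) T \<and> (\<forall>b\<in>B ` C. card (T b) \<le> k)"
  then obtain T where "non_clashing_pos (B ` C) T" "\<forall>b\<in>B ` C. card (T b) \<le> k" by blast
  then have "nc_teaching B C (T \<circ> B) \<and> (\<forall>v\<in>C. card ((T \<circ> B) v) \<le> k)"
    unfolding non_clashing_pos_def nc_teaching_def by auto
  then show "teachable B C k"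
    unfolding teachable_def by blast
qed

lemma NCTD_pos_image_le_iff:
  assumes "finite C" "\<And>v. v \<in> C \<Longrightarrow> finite (B v)"
  shows "NCTD_pos (B ` C) \<le> k \<longleftrightarrow> teachable B C k"
  using assms by (simp add: NCTD_pos_le_iff teachable_iff_non_clashing_pos)

lemma reach_in_closed: "reach_in S E a b \<Longrightarrow> a \<in> S \<Longrightarrow> b \<in> S"
  unfolding reach_in_def by (induction rule: rtranclp.induct) auto

lemma reach_in_sym:
  assumes "\<And>u v. E u v \<Longrightarrow> E v u" "reach_in S E a b"
  shows "reach_in S E b a"
proof -
  have "symp (\<lambda>u w. u \<in> S \<and> w \<in> S \<and> E u w)"
    using assms(1) by (auto intro: sympI)
  then show ?thesis
    using assms(2) unfolding reach_in_def by (blast dest: sympD[OF symp_rtranclp])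
qed

lemma component_subset: "D \<in> components_of S E \<Longrightarrow> D \<subseteq> S"
  unfolding components_of_def by (auto dest: reach_in_closed)

lemma component_nonempty: "D \<in> components_of S E \<Longrightarrow> D \<noteq> {}"
  unfolding components_of_def reach_in_def by auto

lemma finite_components: "finite S \<Longrightarrow> finite (components_of S E)"
  using component_subset by (blast intro: finite_subset[of _ "Pow S"])

lemma card_component_pos:
  assumes "finite S" "D \<in> components_of S E"
  shows "0 < card D"
  using component_nonempty[OF assms(2)] finite_subset[OF component_subset[OF assms(2)] assms(1)]
  by (simp add: card_gt_0_iff)

lemma component_edge_closed:
  assumes "D \<in> components_of S E" "u \<in> D" "E u v" "v \<in> S"
  shows "v \<in> D"
proof -
  obtain v0 where v0: "D = {w. reach_in S E v0 w}" "v0 \<in> S"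
    using assms(1) unfolding components_of_def by blast
  have "reach_in S E v0 u" "u \<in> S"
    using assms(2) v0 reach_in_closed by auto
  moreover have "reach_in S E u v"
    using \<open>u \<in> S\<close> assms(3,4) unfolding reach_in_def by (simp add: r_into_rtranclp)
  ultimately show ?thesis
    using v0(1) unfolding reach_in_def by (auto dest: rtranclp_trans)
qed

lemma component_eq_reach_from_member:
  assumes "\<And>u v. E u v \<Longrightarrow> E v u" "D \<in> components_of S E" "w \<in> D"
  shows "D = {z. reach_in S E w z}"
proof -
  obtain v0 where v0: "D = {z. reach_in S E v0 z}"
    using assms(2) unfolding components_of_def by blast
  then have "reach_in S E v0 w"
    using assms(3) by simp
  moreover have "reach_in S E w v0"
    using reach_in_sym[OF assms(1) \<open>reach_in S E v0 w\<close>] .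
  ultimately show ?thesis
    using v0 unfolding reach_in_def by (auto dest: rtranclp_trans)
qed

lemma components_disjoint:
  assumes "\<And>u v. E u v \<Longrightarrow> E v u" "D1 \<in> components_of S E" "D2 \<in> components_of S E" "D1 \<noteq> D2"
  shows "D1 \<inter> D2 = {}"
proof (rule ccontr)
  assume "D1 \<inter> D2 \<noteq> {}"
  then obtain w where "w \<in> D1" "w \<in> D2" by blast
  then have "D1 = {z. reach_in S E w z}" "D2 = {z. reach_in S E w z}"
    using component_eq_reach_from_member[of E, OF assms(1)] assms(2,3) by blast+
  then show False
    using assms(4) by simp
qed

subsection \<open>Swapping isomorphic components\<close>

definition twin_swap :: "('a \<Rightarrow> 'a \<Rightarrow> bool) \<Rightarrow> 'a set \<Rightarrow> 'a set \<Rightarrow> 'a set \<Rightarrow> ('a \<Rightarrow> 'a) \<Rightarrow> bool" where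
  "twin_swap E C A D s \<longleftrightarrow> (\<forall>u. s (s u) = u) \<and> (\<forall>u v. E (s u) (s v) = E u v)
     \<and> (\<forall>u. u \<notin> A \<union> D \<longrightarrow> s u = u) \<and> s ` A = D \<and> (\<forall>u. s u \<in> C \<longleftrightarrow> u \<in> C)"

definition iso_over :: "('a \<Rightarrow> 'a \<Rightarrow> bool) \<Rightarrow> 'a set \<Rightarrow> 'a set \<Rightarrow> 'a set \<Rightarrow> 'a set \<Rightarrow> ('a \<Rightarrow> 'a) \<Rightarrow> bool"
  where
  "iso_over E C X A D f \<longleftrightarrow> bij_betw f A D \<and> (\<forall>u\<in>A. \<forall>v\<in>A. E (f u) (f v) = E u v)
     \<and> (\<forall>u\<in>A. \<forall>x\<in>X. E (f u) x = E u x) \<and> (\<forall>u\<in>A. f u \<in> C \<longleftrightarrow> u \<in> C)"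

lemma iso_over_inv_into:
  assumes "iso_over E C X A D f"
  shows "iso_over E C X D A (inv_into A f)"
proof -
  let ?g = "inv_into A f"
  have bij: "bij_betw f A D"
    using assms unfolding iso_over_def by blast
  have g: "?g u \<in> A" "f (?g u) = u" if "u \<in> D" for u
    using bij that by (auto simp: bij_betw_def inv_into_into f_inv_into_f)
  have "E (f (?g u)) (f (?g v)) = E (?g u) (?g v)" if "u \<in> D" "v \<in> D" for u v
    using assms g that unfolding iso_over_def by blast
  moreover have "E (f (?g u)) x = E (?g u) x" if "u \<in> D" "x \<in> X" for u x
    using assms g that unfolding iso_over_def by blast
  moreover have "f (?g u) \<in> C \<longleftrightarrow> ?g u \<in> C" if "u \<in> D" for u
    using assms g that unfolding iso_over_def by blast
  ultimately show ?thesis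
    using bij_betw_inv_into[OF bij] g(2) unfolding iso_over_def by auto
qed

definition swap_map :: "'a set \<Rightarrow> 'a set \<Rightarrow> ('a \<Rightarrow> 'a) \<Rightarrow> ('a \<Rightarrow> 'a) \<Rightarrow> 'a \<Rightarrow> 'a" where
  "swap_map A D f g u = (if u \<in> A then f u else if u \<in> D then g u else u)"

lemma swap_map_commute: "A \<inter> D = {} \<Longrightarrow> swap_map A D f g = swap_map D A g f"
  unfolding swap_map_def by fastforce

lemma swap_map_edge_left:
  assumes disj: "A \<inter> D = {}" "A \<inter> X = {}" "D \<inter> X = {}"
    and closedA: "\<forall>u\<in>A. \<forall>v. E u v \<longrightarrow> v \<in> X \<union> A"
    and closedD: "\<forall>u\<in>D. \<forall>v. E u v \<longrightarrow> v \<in> X \<union> D"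
    and iso: "iso_over E C X A D f" and g: "g ` D \<subseteq> A" and u: "u \<in> A"
  shows "E (swap_map A D f g u) (swap_map A D f g v) = E u v"
proof -
  have fu: "swap_map A D f g u = f u" "f u \<in> D"
    using u iso unfolding swap_map_def iso_over_def bij_betw_def by auto
  consider "v \<in> A" | "v \<in> X" | "v \<notin> A \<union> X" by blast
  then show ?thesis
  proof cases
    case 1
    then show ?thesis
      using fu u iso unfolding swap_map_def iso_over_def by simp
  next
    case 2
    then have "swap_map A D f g v = v"
      using disj unfolding swap_map_def by auto
    then show ?thesis
      using 2 fu u iso unfolding iso_over_def by simp
  next
    case 3
    then have "swap_map A D f g v \<notin> X \<union> D"
      using g disj unfolding swap_map_def by auto
    then have "\<not> E (f u) (swap_map A D f g v)"
      using closedD fu(2) by blast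
    moreover have "\<not> E u v"
      using closedA u 3 by blast
    ultimately show ?thesis
      using fu(1) by simp
  qed
qed

lemma swap_map_inv_into_edge:
  assumes disj: "A \<inter> D = {}" "A \<inter> X = {}" "D \<inter> X = {}"
    and closedA: "\<forall>u\<in>A. \<forall>v. E u v \<longrightarrow> v \<in> X \<union> A"
    and closedD: "\<forall>u\<in>D. \<forall>v. E u v \<longrightarrow> v \<in> X \<union> D"
    and iso: "iso_over E C X A D f" and u: "u \<in> A \<union> D"
  shows "E (swap_map A D f (inv_into A f) u) (swap_map A D f (inv_into A f) v) = E u v"
proof (cases "u \<in> A")
  case True
  have "inv_into A f ` D \<subseteq> A"
    using iso_over_inv_into[OF iso] unfolding iso_over_def bij_betw_def by blast
  with True show ?thesis
    using swap_map_edge_left[where E = E, OF disj closedA closedD iso] by blast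
next
  case False
  have "D \<inter> A = {}" "f ` A \<subseteq> D"
    using disj(1) iso unfolding iso_over_def bij_betw_def by blast+
  with False u show ?thesis
    using swap_map_edge_left[where E = E, OF _ disj(3,2) closedD closedA iso_over_inv_into[OF iso]]
      swap_map_commute[OF disj(1)] by auto
qed

lemma swap_map_inv_into_involution:
  assumes "A \<inter> D = {}" "iso_over E C X A D f"
  shows "swap_map A D f (inv_into A f) (swap_map A D f (inv_into A f) u) = u"
proof -
  have "f u \<in> D \<and> inv_into A f (f u) = u" if "u \<in> A" for u
    using assms(2) that unfolding iso_over_def bij_betw_def by (auto simp: inv_into_f_f)
  moreover have "inv_into A f u \<in> A \<and> f (inv_into A f u) = u" if "u \<in> D" for u
    using assms(2) that unfolding iso_over_def bij_betw_def by (auto simp: inv_into_into f_inv_into_f)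
  ultimately show ?thesis
    using assms(1) unfolding swap_map_def by auto
qed

lemma twin_swap_of_iso_over:
  assumes sym: "\<And>u v. E u v \<Longrightarrow> E v u"
    and disj: "A \<inter> D = {}" "A \<inter> X = {}" "D \<inter> X = {}"
    and closedA: "\<forall>u\<in>A. \<forall>v. E u v \<longrightarrow> v \<in> X \<union> A"
    and closedD: "\<forall>u\<in>D. \<forall>v. E u v \<longrightarrow> v \<in> X \<union> D"
    and iso: "iso_over E C X A D f"
  shows "twin_swap E C A D (swap_map A D f (inv_into A f))"
proof -
  let ?s = "swap_map A D f (inv_into A f)"
  note edge_AD = swap_map_inv_into_edge[where E = E, OF disj closedA closedD iso]
  have "E (?s u) (?s v) = E u v" for u v
  proof (cases "u \<in> A \<union> D \<or> v \<in> A \<union> D")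
    case True
    then show ?thesis
      using edge_AD[of u v] edge_AD[of v u] sym by blast
  next
    case False
    then show ?thesis
      by (simp add: swap_map_def)
  qed
  moreover have "?s u \<in> C \<longleftrightarrow> u \<in> C" for u
    using iso iso_over_inv_into[OF iso] disj(1) unfolding iso_over_def swap_map_def by auto
  moreover have "?s ` A = D"
    using iso unfolding swap_map_def iso_over_def bij_betw_def by simp
  ultimately show ?thesis
    using swap_map_inv_into_involution[OF disj(1) iso] unfolding twin_swap_def swap_map_def by auto
qed

subsection \<open>Codes of components\<close>

definition enumeration :: "'a set \<Rightarrow> nat \<Rightarrow> 'a" where
  "enumeration A = (SOME f. bij_betw f {..<card A} A)"

lemma bij_betw_enumeration:
  assumes "finite A"
  shows "bij_betw (enumeration A) {..<card A} A"
proof -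
  obtain h where "bij_betw h {..<card A} A"
    using ex_bij_betw_nat_finite[OF assms] by (auto simp: atLeast0LessThan)
  then show ?thesis
    unfolding enumeration_def by (rule someI[where P = "\<lambda>f. bij_betw f {..<card A} A"])
qed

definition component_code ::
    "('a \<Rightarrow> 'a \<Rightarrow> bool) \<Rightarrow> 'a set \<Rightarrow> 'a set \<Rightarrow> 'a set \<Rightarrow> nat \<times> (nat \<times> nat) set \<times> (nat \<times> 'a) set \<times> nat set"
  where
  "component_code E C X A = (let n = card A; f = enumeration A in
     (n, {(p, q). p < n \<and> q < n \<and> E (f p) (f q)}, {(p, x). p < n \<and> x \<in> X \<and> E (f p) x},
      {p. p < n \<and> f p \<in> C}))"

lemma iso_over_of_code_eq:
  assumes "finite A" "finite D" "component_code E C X A = component_code E C X D"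
  shows "iso_over E C X A D (enumeration D \<circ> the_inv_into {..<card A} (enumeration A))"
proof -
  define n fA fD where "n = card A" and "fA = enumeration A" and "fD = enumeration D"
  have cardA: "card A = n"
    by (simp add: n_def)
  have cardD: "card D = n"
    using assms(3) cardA by (simp add: component_code_def Let_def)
  have code:
    "{(p, q). p < n \<and> q < n \<and> E (fA p) (fA q)} = {(p, q). p < n \<and> q < n \<and> E (fD p) (fD q)}"
    "{(p, x). p < n \<and> x \<in> X \<and> E (fA p) x} = {(p, x). p < n \<and> x \<in> X \<and> E (fD p) x}"
    "{p. p < n \<and> fA p \<in> C} = {p. p < n \<and> fD p \<in> C}"
    using assms(3) unfolding component_code_def Let_def fA_def fD_def cardA cardD by simp_all
  have bA: "bij_betw fA {..<n} A" and bD: "bij_betw fD {..<n} D"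
    using bij_betw_enumeration assms(1,2) cardA cardD unfolding fA_def fD_def by metis+
  define g where "g = the_inv_into {..<n} fA"
  have g: "bij_betw g A {..<n}"
    unfolding g_def by (rule bij_betw_the_inv_into[OF bA])
  have fAg: "fA (g u) = u" if "u \<in> A" for u
    unfolding g_def using f_the_inv_into_f_bij_betw[OF bA] that by blast
  have g_less: "g u < n" if "u \<in> A" for u
    using g that by (auto simp: bij_betw_def)
  have "E (fD p) (fD q) = E (fA p) (fA q)" if "p < n" "q < n" for p q
    using arg_cong[where f = "\<lambda>S. (p, q) \<in> S", OF code(1)] that by simp
  moreover have "E (fD p) x = E (fA p) x" if "p < n" "x \<in> X" for p x
    using arg_cong[where f = "\<lambda>S. (p, x) \<in> S", OF code(2)] that by simp
  moreover have "fD p \<in> C \<longleftrightarrow> fA p \<in> C" if "p < n" for p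
    using arg_cong[where f = "\<lambda>S. p \<in> S", OF code(3)] that by simp
  ultimately have "iso_over E C X A D (fD \<circ> g)"
    using bij_betw_trans[OF g bD] unfolding iso_over_def by (simp add: g_less fAg)
  then show ?thesis
    unfolding g_def fD_def fA_def n_def .
qed

lemma twin_swap_of_code_eq:
  assumes graph: "simple_graph V E"
    and A: "A \<in> components_of (V - X) E" and D: "D \<in> components_of (V - X) E" and "A \<noteq> D"
    and "component_code E C X A = component_code E C X D"
  shows "\<exists>s. twin_swap E C A D s"
proof -
  have sym: "\<And>u v. E u v \<Longrightarrow> E v u" and finite: "finite V" and edge: "\<And>u v. E u v \<Longrightarrow> v \<in> V"
    using graph unfolding simple_graph_def by blast+
  have closed: "\<forall>u\<in>B. \<forall>v. E u v \<longrightarrow> v \<in> X \<union> B" if "B \<in> components_of (V - X) E" for B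
    using component_edge_closed[OF that] edge by blast
  have "A \<subseteq> V - X" "D \<subseteq> V - X"
    using component_subset A D by blast+
  moreover from this have "finite A" "finite D"
    using finite finite_subset by blast+
  ultimately have iso: "iso_over E C X A D (enumeration D \<circ> the_inv_into {..<card A} (enumeration A))"
    using iso_over_of_code_eq assms(5) by blast
  have "A \<inter> D = {}"
    using components_disjoint[of E, OF sym A D \<open>A \<noteq> D\<close>] .
  then show ?thesis
    using twin_swap_of_iso_over[where E = E, OF sym _ _ _ closed[OF A] closed[OF D] iso]
      \<open>A \<subseteq> V - X\<close> \<open>D \<subseteq> V - X\<close> by blast
qed

lemma linear_le_two_pow: "1 \<le> t \<Longrightarrow> 2 * a + t + 1 \<le> (2::nat) ^ (a + t)"
proof (induction a)
  case 0
  have "t < 2 ^ t"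
    by simp
  then show ?case
    by (simp add: Suc_le_eq)
next
  case (Suc a)
  have "(2::nat) ^ 1 \<le> 2 ^ (a + t)"
    using Suc.prems by (intro power_increasing) auto
  then show ?case
    using Suc by simp
qed

lemma code_count_bound:
  fixes a t :: nat
  assumes "1 \<le> t"
  shows "t * 2 ^ (t * t) * 2 ^ (t * a) * 2 ^ t * (2 * a + t + 1)
         \<le> (a + t) * 2 ^ ((a + t)\<^sup>2) * 2 ^ (2 * t + a + 1)"
proof -
  have "t * 2 ^ (t * t) * 2 ^ (t * a) * 2 ^ t * (2 * a + t + 1)
        \<le> t * 2 ^ (t * t) * 2 ^ (t * a) * 2 ^ t * 2 ^ (a + t)"
    using linear_le_two_pow[OF assms, of a] by (intro mult_left_mono) simp_all
  also have "\<dots> = t * 2 ^ (t * t + t * a + t + (a + t))"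
    by (simp add: power_add)
  also have "\<dots> \<le> (a + t) * 2 ^ ((a + t)\<^sup>2 + (2 * t + a + 1))"
  proof (rule mult_mono)
    have "t * t + t * a + t + (a + t) \<le> (a + t)\<^sup>2 + (2 * t + a + 1)"
      by (simp add: power2_eq_square algebra_simps)
    then show "(2::nat) ^ (t * t + t * a + t + (a + t)) \<le> 2 ^ ((a + t)\<^sup>2 + (2 * t + a + 1))"
      by (intro power_increasing) simp_all
  qed simp_all
  also have "\<dots> = (a + t) * 2 ^ ((a + t)\<^sup>2) * 2 ^ (2 * t + a + 1)"
    by (simp add: power_add)
  finally show ?thesis .
qed

definition code_space :: "nat \<Rightarrow> 'a set \<Rightarrow> (nat \<times> (nat \<times> nat) set \<times> (nat \<times> 'a) set \<times> nat set) set"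
  where "code_space t X = {1..t} \<times> Pow ({..<t} \<times> {..<t}) \<times> Pow ({..<t} \<times> X) \<times> Pow {..<t}"

lemma component_code_in_code_space:
  "1 \<le> card A \<Longrightarrow> card A \<le> t \<Longrightarrow> component_code E C X A \<in> code_space t X"
  unfolding component_code_def code_space_def Let_def by auto

lemma finite_code_space: "finite X \<Longrightarrow> finite (code_space t X)"
  unfolding code_space_def by simp

lemma card_code_space:
  "finite X \<Longrightarrow> card (code_space t X) = t * 2 ^ (t * t) * 2 ^ (t * card X) * 2 ^ t"
  unfolding code_space_def by (simp add: card_cartesian_product card_Pow)

lemma pigeonhole_large_fiber:
  assumes f: "f \<in> S \<rightarrow> K" and "finite S" "finite K" and big: "card K * m < card S"
  obtains c where "m < card (f -` {c} \<inter> S)"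
proof -
  have "K \<noteq> {}"
    using f big by (auto simp: Pi_def)
  then obtain c where "card S \<le> card (f -` {c} \<inter> S) * card K"
    using pigeonhole_card[OF f assms(2,3)] by blast
  with big have "card K * m < card K * card (f -` {c} \<inter> S)"
    by (simp only: mult.commute[of _ "card K"])
  then show ?thesis
    using that mult_less_cancel1 by blast
qed

lemma exists_large_twin_class:
  assumes graph: "simple_graph V E" and X: "X \<subseteq> V" and \<A>: "\<A> \<subseteq> components_of (V - X) E"
    and small: "\<forall>A\<in>\<A>. card A \<le> t"
    and big: "(card X + t) * 2 ^ ((card X + t)\<^sup>2) * 2 ^ (2 * t + card X + 1) < card \<A>"
  shows "\<exists>DD\<subseteq>\<A>. 2 * card X + t + 1 < card DD \<and>
           (\<forall>A\<in>DD. \<forall>D\<in>DD. A \<noteq> D \<longrightarrow> (\<exists>s. twin_swap E C A D s))"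
proof -
  have "finite V"
    using graph unfolding simple_graph_def by blast
  then have finite: "finite X" "finite \<A>" "finite (V - X)"
    using X finite_subset[OF \<A> finite_components] by (auto intro: finite_subset)
  have card_pos: "1 \<le> card A" if "A \<in> \<A>" for A
    using card_component_pos[OF finite(3), of A E] \<A> that by (simp add: Suc_le_eq subset_iff)
  then have code: "component_code E C X \<in> \<A> \<rightarrow> code_space t X"
    using small component_code_in_code_space by blast
  have "\<A> \<noteq> {}"
    using big card.empty not_less_zero by metis
  then have "1 \<le> t"
    using small card_pos by fastforce
  have "card (code_space t X) * (2 * card X + t + 1)
      \<le> (card X + t) * 2 ^ ((card X + t)\<^sup>2) * 2 ^ (2 * t + card X + 1)"
    unfolding card_code_space[OF finite(1)] by (rule code_count_bound[OF \<open>1 \<le> t\<close>])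
  then obtain c where c: "2 * card X + t + 1 < card (component_code E C X -` {c} \<inter> \<A>)"
    using pigeonhole_large_fiber[OF code finite(2) finite_code_space[OF finite(1)]] big
    by (meson le_less_trans)
  have "\<exists>s. twin_swap E C A D s"
    if "A \<in> component_code E C X -` {c} \<inter> \<A>" "D \<in> component_code E C X -` {c} \<inter> \<A>" "A \<noteq> D"
    for A D
  proof -
    have "A \<in> components_of (V - X) E" "D \<in> components_of (V - X) E"
      "component_code E C X A = component_code E C X D"
      using that \<A> by auto
    then show ?thesis
      by (rule twin_swap_of_code_eq[OF graph _ _ \<open>A \<noteq> D\<close>])
  qed
  with c show ?thesis
    by (intro exI[of _ "component_code E C X -` {c} \<inter> \<A>"]) blast
qed

lemma exists_other_of_card_ge_3:
  assumes "3 \<le> card S"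
  obtains l where "l \<in> S" "l \<noteq> a" "l \<noteq> b"
proof -
  have "card S \<le> card {a, b}" if "S \<subseteq> {a, b}"
    using that by (simp add: card_mono)
  moreover have "card {a, b} \<le> 2"
    by (simp add: card_insert_le_m1)
  ultimately have "\<not> S \<subseteq> {a, b}"
    using assms by linarith
  then show ?thesis
    using that by blast
qed

locale twin_components =
  fixes V :: "'a set" and E :: "'a \<Rightarrow> 'a \<Rightarrow> bool" and C X :: "'a set" and DD :: "'a set set"
  assumes graph: "simple_graph V E" and C_subset: "C \<subseteq> V" and X_subset: "X \<subseteq> V"
    and DD_components: "DD \<subseteq> components_of (V - X) E"
    and twins: "\<And>A D. A \<in> DD \<Longrightarrow> D \<in> DD \<Longrightarrow> A \<noteq> D \<Longrightarrow> \<exists>s. twin_swap E C A D s"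
begin

abbreviation N :: "'a \<Rightarrow> 'a set" where
  "N \<equiv> closed_nbhd V E"

abbreviation N_del :: "'a set \<Rightarrow> 'a \<Rightarrow> 'a set" where
  "N_del A \<equiv> closed_nbhd (V - A) E"

lemma edge_sym: "E u v \<Longrightarrow> E v u"
  using graph unfolding simple_graph_def by blast

lemma edge_in_V: "E u v \<Longrightarrow> v \<in> V"
  using graph unfolding simple_graph_def by blast

lemma finite_V: "finite V"
  using graph unfolding simple_graph_def by blast

lemma finite_X: "finite X"
  using finite_V X_subset by (rule finite_subset[rotated])

lemma twin_subset: "D \<in> DD \<Longrightarrow> D \<subseteq> V - X"
  using DD_components component_subset by blast

lemma twin_component: "D \<in> DD \<Longrightarrow> D \<in> components_of (V - X) E"
  using DD_components by (rule subsetD)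

lemma finite_DD: "finite DD"
  using finite_subset[OF DD_components finite_components[OF finite_Diff[OF finite_V]]] .

lemma finite_twin: "D \<in> DD \<Longrightarrow> finite D"
  using twin_subset finite_V by (meson Diff_subset finite_subset order_trans)

lemma twin_edge:
  assumes "D \<in> DD" "u \<in> D" "E u v"
  shows "v \<in> X \<or> v \<in> D"
  using component_edge_closed[OF twin_component[OF assms(1)] assms(2,3)] edge_in_V[OF assms(3)]
  by blast

lemma twins_disjoint: "A \<in> DD \<Longrightarrow> D \<in> DD \<Longrightarrow> A \<noteq> D \<Longrightarrow> A \<inter> D = {}"
  by (rule components_disjoint[of E, OF edge_sym twin_component twin_component])

lemma nbhd_inter_twin:
  assumes "D \<in> DD" "v \<notin> X" "v \<notin> D"
  shows "N v \<inter> D = {}"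
proof -
  have False if "u \<in> N v" "u \<in> D" for u
  proof -
    have "E u v"
      using that assms(3) unfolding closed_nbhd_def by auto
    then show False
      using twin_edge[OF assms(1) \<open>u \<in> D\<close>] assms(2,3) by blast
  qed
  then show ?thesis by blast
qed

lemma nbhd_twin_subset:
  assumes "D \<in> DD" "v \<in> D"
  shows "N v \<subseteq> D \<union> X"
proof
  fix u assume "u \<in> N v"
  then have "u = v \<or> E v u"
    unfolding closed_nbhd_def using edge_sym by auto
  then show "u \<in> D \<union> X"
    using twin_edge[OF assms] assms(2) by blast
qed

lemma N_del_twin:
  assumes "A \<in> DD" "D \<in> DD" "A \<noteq> D" "v \<in> D"
  shows "N_del A v = N v"
proof -
  have "v \<notin> A" "v \<notin> X"
    using twins_disjoint[OF assms(1-3)] twin_subset[OF assms(2)] assms(4) by auto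
  then show ?thesis
    using closed_nbhd_Diff nbhd_inter_twin[OF assms(1)] by (metis Diff_triv)
qed

context
  fixes A D s
  assumes swap: "twin_swap E C A D s" and A: "A \<in> DD" and D: "D \<in> DD"
begin

lemma swap_swap [simp]: "s (s u) = u"
  using swap unfolding twin_swap_def by blast

lemma swap_edge: "E (s u) (s v) = E u v"
  using swap unfolding twin_swap_def by blast

lemma swap_C: "s u \<in> C \<longleftrightarrow> u \<in> C"
  using swap unfolding twin_swap_def by blast

lemma swap_outside: "u \<notin> A \<union> D \<Longrightarrow> s u = u"
  using swap unfolding twin_swap_def by blast

lemma inj_swap: "inj s"
  by (metis injI swap_swap)

lemma swap_mem_image: "x \<in> s ` S \<longleftrightarrow> s x \<in> S"
  by (metis image_eqI imageE swap_swap)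

lemma swap_mem_D: "s u \<in> D \<longleftrightarrow> u \<in> A"
  using swap swap_mem_image[of "s u" A] unfolding twin_swap_def by simp

lemma swap_mem_A: "s u \<in> A \<longleftrightarrow> u \<in> D"
  using swap_mem_D[of "s u"] by simp

lemma swap_fixes_X: "x \<in> X \<Longrightarrow> s x = x"
  using twin_subset[OF A] twin_subset[OF D] by (blast intro: swap_outside)

lemma swap_mem_V: "s u \<in> V \<longleftrightarrow> u \<in> V"
proof (cases "u \<in> A \<union> D")
  case True
  then have "s u \<in> A \<union> D"
    using swap_mem_A swap_mem_D by blast
  with True show ?thesis
    using twin_subset[OF A] twin_subset[OF D] by blast
qed (simp add: swap_outside)

lemma swap_mem_nbhd: "s w \<in> N (s v) \<longleftrightarrow> w \<in> N v"
  unfolding closed_nbhd_def by (simp add: swap_mem_V swap_edge inj_eq[OF inj_swap])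

lemma swap_mem_nbhd_X: "x \<in> X \<Longrightarrow> s w \<in> N x \<longleftrightarrow> w \<in> N x"
  using swap_mem_nbhd[of w x] swap_fixes_X by simp

lemma mem_nbhd_swap_X: "x \<in> X \<Longrightarrow> x \<in> N (s u) \<longleftrightarrow> x \<in> N u"
  using swap_mem_nbhd[of x u] swap_fixes_X by simp

lemma swap_image_nbhd: "s ` N v = N (s v)"
proof (rule set_eqI)
  fix x
  have "x \<in> s ` N v \<longleftrightarrow> s x \<in> N v"
    by (rule swap_mem_image)
  also have "\<dots> \<longleftrightarrow> s (s x) \<in> N (s v)"
    by (rule swap_mem_nbhd[symmetric])
  finally show "x \<in> s ` N v \<longleftrightarrow> x \<in> N (s v)"
    by simp
qed

end

lemma nbhd_meets_twin:
  assumes "x \<in> X" "A \<in> DD" "D \<in> DD" "N x \<inter> A \<noteq> {}"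
  shows "N x \<inter> D \<noteq> {}"
proof (cases "A = D")
  case False
  then obtain s where s: "twin_swap E C A D s"
    using twins assms(2,3) by blast
  obtain a where "a \<in> N x" "a \<in> A"
    using assms(4) by blast
  then have "s a \<in> N x" "s a \<in> D"
    using swap_mem_nbhd_X[OF s assms(2,3,1)] swap_mem_D[OF s assms(2,3)] by auto
  then show ?thesis by blast
qed (use assms in simp)

lemma twin_part_of_nbhd_determined:
  assumes three: "3 \<le> card DD" and A: "A \<in> DD" and "v1 \<notin> A" "v2 \<notin> A"
    and eq: "N v1 - A = N v2 - A" and a: "a \<in> A" "a \<in> N v1"
  shows "a \<in> N v2"
proof -
  have v1: "v1 \<in> X"
    using nbhd_inter_twin[OF A _ \<open>v1 \<notin> A\<close>] a by blast
  obtain D where D: "D \<in> DD" "D \<noteq> A"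
    using exists_other_of_card_ge_3[OF three] by metis
  obtain l where l: "l \<in> DD" "l \<noteq> A" "l \<noteq> D"
    using exists_other_of_card_ge_3[OF three] by metis
  show ?thesis
  proof (cases "v2 \<in> X")
    case True
    obtain s where s: "twin_swap E C A D s"
      using twins A D by metis
    have "s a \<in> N v1" "s a \<notin> A"
      using swap_mem_nbhd_X[OF s A D(1) v1] swap_mem_D[OF s A D(1)] twins_disjoint[OF A D(1)] D(2) a
      by auto
    then have "s a \<in> N v2"
      using eq by blast
    then show ?thesis
      using swap_mem_nbhd_X[OF s A D(1) True] by simp
  next
    case False
    have "N v1 \<inter> D \<noteq> {}" "N v1 \<inter> l \<noteq> {}"
      using nbhd_meets_twin[OF v1 A] D(1) l(1) a by blast+
    moreover have "D \<inter> A = {}" "l \<inter> A = {}"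
      using twins_disjoint A D l by blast+
    ultimately have "N v2 \<inter> D \<noteq> {}" "N v2 \<inter> l \<noteq> {}"
      using eq by blast+
    then have "v2 \<in> D" "v2 \<in> l"
      using nbhd_inter_twin[OF _ False] D(1) l(1) by blast+
    then show ?thesis
      using twins_disjoint[OF l(1) D(1) l(3)] by blast
  qed
qed

lemma nbhd_eq_if_Diff_twin_eq:
  assumes "3 \<le> card DD" "A \<in> DD" "v1 \<notin> A" "v2 \<notin> A" "N v1 - A = N v2 - A"
  shows "N v1 = N v2"
  using twin_part_of_nbhd_determined[OF assms] twin_part_of_nbhd_determined[OF assms(1-2,4,3) assms(5)[symmetric]]
    assms(5) by blast

end

subsection \<open>Removing a twin\<close>

definition relocate :: "('a \<Rightarrow> 'a) \<Rightarrow> 'a set \<Rightarrow> 'a set \<Rightarrow> 'a set" where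
  "relocate s A S = (S - A) \<union> s ` (S \<inter> A)"

lemma card_relocate_le:
  assumes "finite S"
  shows "card (relocate s A S) \<le> card S"
proof -
  have "card (relocate s A S) \<le> card (S - A) + card (s ` (S \<inter> A))"
    unfolding relocate_def by (rule card_Un_le)
  also have "\<dots> \<le> card (S - A) + card (S \<inter> A)"
    using assms by (simp add: card_image_le)
  also have "\<dots> = card S"
    using card_Int_Diff[OF assms, of A] by simp
  finally show ?thesis .
qed

lemma exists_member_hit_thrice:
  assumes "finite \<D>" "finite X" "2 * card X < card \<D>"
  shows "\<exists>A\<in>\<D>. \<forall>x\<in>X. T x \<inter> A \<noteq> {} \<longrightarrow> 3 \<le> card {D\<in>\<D>. T x \<inter> D \<noteq> {}}"
proof -
  define hit where "hit x = {D\<in>\<D>. T x \<inter> D \<noteq> {}}" for x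
  define rarely_hit where "rarely_hit = (\<Union>x\<in>{x\<in>X. card (hit x) \<le> 2}. hit x)"
  have "card rarely_hit \<le> (\<Sum>x\<in>{x\<in>X. card (hit x) \<le> 2}. card (hit x))"
    unfolding rarely_hit_def using assms(2) by (intro card_UN_le) simp
  also have "\<dots> \<le> (\<Sum>x\<in>{x\<in>X. card (hit x) \<le> 2}. 2)"
    by (intro sum_mono) simp
  also have "\<dots> \<le> 2 * card X"
    using assms(2) by (simp add: card_mono)
  finally have "card rarely_hit < card \<D>"
    using assms(3) by linarith
  moreover have "finite rarely_hit"
    using assms(1) by (rule finite_subset[rotated]) (auto simp: rarely_hit_def hit_def)
  ultimately obtain A where A: "A \<in> \<D>" "A \<notin> rarely_hit"
    by (meson card_mono not_le subsetI)
  have "3 \<le> card (hit x)" if "x \<in> X" "T x \<inter> A \<noteq> {}" for x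
  proof (rule ccontr)
    assume "\<not> 3 \<le> card (hit x)"
    moreover have "A \<in> hit x"
      unfolding hit_def using A(1) that(2) by blast
    ultimately have "A \<in> rarely_hit"
      unfolding rarely_hit_def using that(1) by auto
    then show False
      using A(2) by blast
  qed
  then show ?thesis
    using A(1) unfolding hit_def by blast
qed

context twin_components
begin

context
  fixes \<tau> A D s
  assumes \<tau>: "nc_teaching N C \<tau>" and A: "A \<in> DD" and D: "D \<in> DD" "D \<noteq> A"
    and swap: "twin_swap E C A D s"
    and hit_thrice: "\<And>x. x \<in> X \<Longrightarrow> \<tau> x \<inter> A \<noteq> {} \<Longrightarrow> 3 \<le> card {D\<in>DD. \<tau> x \<inter> D \<noteq> {}}"
begin

lemma relocate_subset_N_del:
  assumes v: "v \<in> C - A"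
  shows "relocate s A (\<tau> v) \<subseteq> N_del A v"
proof -
  have "s a \<in> N v - A" if "a \<in> \<tau> v \<inter> A" for a
  proof -
    have "a \<in> N v"
      using nc_teaching_subset[OF \<tau>] v that by blast
    moreover from this have "v \<in> X"
      using nbhd_inter_twin[OF A, of v] v that by blast
    ultimately have "s a \<in> N v"
      using swap_mem_nbhd_X[OF swap A D(1)] by simp
    moreover have "s a \<notin> A"
      using swap_mem_D[OF swap A D(1)] twins_disjoint[OF A D(1)] D(2) that by blast
    ultimately show ?thesis by blast
  qed
  then show ?thesis
    using nc_teaching_subset[OF \<tau>] v closed_nbhd_Diff[of v A]
    unfolding relocate_def by blast
qed

lemma relocate_separates:
  assumes v1: "v1 \<in> C - A" and v2: "v2 \<in> C - A" and w: "w \<in> \<tau> v1" "w \<in> A" "w \<notin> N v2"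
  shows "\<exists>w'\<in>relocate s A (\<tau> v1). w' \<in> N_del A v1 \<and> w' \<notin> N_del A v2"
proof -
  have N_del_v2: "N_del A v2 \<subseteq> N v2"
    using v2 by (simp add: closed_nbhd_Diff)
  have v1X: "v1 \<in> X"
    using nbhd_inter_twin[OF A, of v1] nc_teaching_subset[OF \<tau>] v1 w by blast
  have sw: "s w \<in> relocate s A (\<tau> v1)" "s w \<in> D"
    using w swap_mem_D[OF swap A D(1)] unfolding relocate_def by blast+
  then have sw_N: "s w \<in> N_del A v1"
    using relocate_subset_N_del[OF v1] by blast
  show ?thesis
  proof (cases "v2 \<in> D")
    case False
    then have "s w \<notin> N v2"
      using swap_mem_nbhd_X[OF swap A D(1)] nbhd_inter_twin[OF D(1)] w(3) sw(2)
      by (cases "v2 \<in> X") blast+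
    then show ?thesis
      using sw sw_N N_del_v2 by blast
  next
    case True
    txt \<open>Now \<open>s w\<close> may be adjacent to \<open>v2\<close>; instead, the teaching set of \<open>v1\<close> meets a third twin.\<close>
    have meets_A: "\<tau> v1 \<inter> A \<noteq> {}"
      using w by blast
    obtain l where l: "l \<in> {D\<in>DD. \<tau> v1 \<inter> D \<noteq> {}}" "l \<noteq> A" "l \<noteq> D"
      by (rule exists_other_of_card_ge_3[OF hit_thrice[OF v1X meets_A]])
    then obtain e where e: "e \<in> \<tau> v1" "e \<in> l" and "l \<in> DD"
      by blast
    have "e \<notin> A"
      using twins_disjoint[OF \<open>l \<in> DD\<close> A l(2)] e(2) by blast
    then have "e \<in> relocate s A (\<tau> v1)" "e \<in> N_del A v1"
      using e(1) relocate_subset_N_del[OF v1] unfolding relocate_def by blast+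
    moreover have "e \<notin> N v2"
      using nbhd_twin_subset[OF D(1) True] twins_disjoint[OF \<open>l \<in> DD\<close> D(1) l(3)]
        twin_subset[OF \<open>l \<in> DD\<close>] e(2) by blast
    ultimately show ?thesis
      using N_del_v2 by blast
  qed
qed

lemma nc_teaching_relocate: "nc_teaching (N_del A) (C - A) (\<lambda>v. relocate s A (\<tau> v))"
  unfolding nc_teaching_def
proof (intro conjI ballI impI)
  fix v assume "v \<in> C - A"
  then show "relocate s A (\<tau> v) \<subseteq> N_del A v"
    by (rule relocate_subset_N_del)
next
  fix v1 v2 assume v: "v1 \<in> C - A" "v2 \<in> C - A" and ne: "N_del A v1 \<noteq> N_del A v2"
  have N_del: "N_del A v1 = N v1 - A" "N_del A v2 = N v2 - A"
    using v by (simp_all add: closed_nbhd_Diff)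
  with ne have "N v1 \<noteq> N v2"
    by metis
  then obtain w where w: "w \<in> \<tau> v1 \<union> \<tau> v2" "(w \<in> N v1) \<noteq> (w \<in> N v2)"
    using nc_teachingD[OF \<tau>] v by blast
  show "\<exists>w\<in>relocate s A (\<tau> v1) \<union> relocate s A (\<tau> v2). (w \<in> N_del A v1) \<noteq> (w \<in> N_del A v2)"
  proof (cases "w \<in> A")
    case False
    then show ?thesis
      using w N_del unfolding relocate_def by blast
  next
    case True
    then consider "w \<in> \<tau> v1" "w \<notin> N v2" | "w \<in> \<tau> v2" "w \<notin> N v1"
      using w nc_teaching_subset[OF \<tau>] v by blast
    then show ?thesis
    proof cases
      case 1
      then show ?thesis
        using relocate_separates[OF v 1(1) True 1(2)] by blast
    next
      case 2
      then show ?thesis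
        using relocate_separates[OF v(2,1) 2(1) True 2(2)] by blast
    qed
  qed
qed

end

lemma teachable_remove_twin:
  assumes "teachable N C k" "2 * card X < card DD" "3 \<le> card DD"
  shows "\<exists>A\<in>DD. teachable (N_del A) (C - A) k"
proof -
  obtain \<tau> where \<tau>: "nc_teaching N C \<tau>" "\<forall>v\<in>C. card (\<tau> v) \<le> k"
    using assms(1) unfolding teachable_def by blast
  obtain A where A: "A \<in> DD" and hit: "\<forall>x\<in>X. \<tau> x \<inter> A \<noteq> {} \<longrightarrow> 3 \<le> card {D\<in>DD. \<tau> x \<inter> D \<noteq> {}}"
    using exists_member_hit_thrice[OF finite_DD finite_X assms(2), of \<tau>] by blast
  obtain D where D: "D \<in> DD" "D \<noteq> A"
    using exists_other_of_card_ge_3[OF assms(3), of A A] by blast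
  obtain s where s: "twin_swap E C A D s"
    using twins[OF A D(1)] D(2) by blast
  have "nc_teaching (N_del A) (C - A) (\<lambda>v. relocate s A (\<tau> v))"
    using nc_teaching_relocate[OF \<tau>(1) A D s] hit by blast
  moreover have "card (relocate s A (\<tau> v)) \<le> k" if "v \<in> C" for v
  proof -
    have "finite (\<tau> v)"
      using nc_teaching_subset[OF \<tau>(1) that] finite_closed_nbhd[OF finite_V] by (rule finite_subset)
    then show ?thesis
      using card_relocate_le \<tau>(2) that le_trans by blast
  qed
  ultimately show ?thesis
    using A unfolding teachable_def by blast
qed

end

subsection \<open>Putting a twin back\<close>

definition extend_by_swap :: "('a \<Rightarrow> 'a) \<Rightarrow> 'a set \<Rightarrow> ('a \<Rightarrow> 'a set) \<Rightarrow> 'a \<Rightarrow> 'a set" where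
  "extend_by_swap s A \<tau> v = (if v \<in> A then s ` \<tau> (s v) else \<tau> v)"

context twin_components
begin

lemma at_most_one_twin_taught_inside_X:
  assumes \<tau>: "nc_teaching (N_del A) (C - A) \<tau>" and A: "A \<in> DD" and u: "u \<in> A \<inter> C"
    and sw: "\<And>D. D \<in> DD \<Longrightarrow> D \<noteq> A \<Longrightarrow> twin_swap E C A D (sw D)"
  shows "card {D \<in> DD - {A}. \<tau> (sw D u) \<subseteq> X} \<le> 1"
proof -
  have "D1 = D2" if D1: "D1 \<in> DD - {A}" "\<tau> (sw D1 u) \<subseteq> X"
    and D2: "D2 \<in> DD - {A}" "\<tau> (sw D2 u) \<subseteq> X" for D1 D2
  proof (rule ccontr)
    assume ne: "D1 \<noteq> D2"
    have sw1: "twin_swap E C A D1 (sw D1)" and sw2: "twin_swap E C A D2 (sw D2)"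
      using sw D1(1) D2(1) by blast+
    have in1: "sw D1 u \<in> D1" and in2: "sw D2 u \<in> D2"
      using swap_mem_D[OF sw1 A] swap_mem_D[OF sw2 A] D1(1) D2(1) u by blast+
    have C1: "sw D1 u \<in> C - A" and C2: "sw D2 u \<in> C - A"
      using swap_C[OF sw1 A] swap_C[OF sw2 A] twins_disjoint[OF A] in1 in2 D1(1) D2(1) u by blast+
    have N1: "N_del A (sw D1 u) = N (sw D1 u)" and N2: "N_del A (sw D2 u) = N (sw D2 u)"
      using N_del_twin[OF A] in1 in2 D1(1) D2(1) by (metis DiffE insertCI)+
    have "sw D1 u \<notin> N (sw D2 u)"
      using nbhd_twin_subset[OF _ in2] twins_disjoint[OF _ _ ne] twin_subset in1 D1(1) D2(1) by blast
    then have "N (sw D1 u) \<noteq> N (sw D2 u)"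
      using closed_nbhd_self by metis
    then obtain w where w: "w \<in> \<tau> (sw D1 u) \<union> \<tau> (sw D2 u)" "(w \<in> N (sw D1 u)) \<noteq> (w \<in> N (sw D2 u))"
      using nc_teachingD[OF \<tau> C1 C2] N1 N2 by auto
    have "w \<in> X"
      using w(1) D1(2) D2(2) by blast
    then show False
      using w(2) mem_nbhd_swap_X[OF sw1 A] mem_nbhd_swap_X[OF sw2 A] D1(1) D2(1) by blast
  qed
  moreover have "finite {D \<in> DD - {A}. \<tau> (sw D u) \<subseteq> X}"
    using finite_DD by simp
  ultimately show ?thesis
    by (simp add: card_le_Suc0_iff_eq)
qed

lemma exists_twin_taught_outside_X:
  assumes \<tau>: "nc_teaching (N_del A) (C - A) \<tau>" and A: "A \<in> DD" and big: "card A + 2 \<le> card DD"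
  obtains D s where "D \<in> DD" "D \<noteq> A" "twin_swap E C A D s" "\<And>u. u \<in> A \<inter> C \<Longrightarrow> \<not> \<tau> (s u) \<subseteq> X"
proof -
  define sw where "sw D = (SOME s. twin_swap E C A D s)" for D
  have sw: "twin_swap E C A D (sw D)" if "D \<in> DD" "D \<noteq> A" for D
    unfolding sw_def using twins[OF A that(1)] that(2) by (metis someI_ex)
  define bad where "bad = (\<Union>u\<in>A \<inter> C. {D \<in> DD - {A}. \<tau> (sw D u) \<subseteq> X})"
  have "card bad \<le> (\<Sum>u\<in>A \<inter> C. card {D \<in> DD - {A}. \<tau> (sw D u) \<subseteq> X})"
    unfolding bad_def using finite_twin[OF A] by (intro card_UN_le) simp
  also have "\<dots> \<le> (\<Sum>u\<in>A \<inter> C. 1)"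
    using at_most_one_twin_taught_inside_X[OF \<tau> A _ sw] by (intro sum_mono) blast
  also have "\<dots> \<le> card A"
    using finite_twin[OF A] by (simp add: card_mono)
  also have "\<dots> < card (DD - {A})"
    using big A finite_DD by simp
  finally have "bad \<noteq> DD - {A}"
    by auto
  moreover have "bad \<subseteq> DD - {A}"
    unfolding bad_def by blast
  ultimately obtain D where "D \<in> DD" "D \<noteq> A" "D \<notin> bad"
    by blast
  then show ?thesis
    using that[OF _ _ sw] unfolding bad_def by blast
qed

context
  fixes \<tau> A D s
  assumes \<tau>: "nc_teaching (N_del A) (C - A) \<tau>" and A: "A \<in> DD" and D: "D \<in> DD" "D \<noteq> A"
    and swap: "twin_swap E C A D s" and three: "3 \<le> card DD"
    and outside_X: "\<And>u. u \<in> A \<inter> C \<Longrightarrow> \<not> \<tau> (s u) \<subseteq> X"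
begin

declare swap_swap[OF swap A D(1), simp]

lemma swap_in_twin:
  assumes "u \<in> A"
  shows "s u \<in> D" "s u \<notin> A" "N_del A (s u) = N (s u)"
  using swap_mem_D[OF swap A D(1)] twins_disjoint[OF A D(1)] N_del_twin[OF A D(1)] D(2) assms
  by auto

lemma extend_by_swap_subset:
  assumes "v \<in> C"
  shows "extend_by_swap s A \<tau> v \<subseteq> N v"
proof (cases "v \<in> A")
  case True
  then have "\<tau> (s v) \<subseteq> N (s v)"
    using nc_teaching_subset[OF \<tau>, of "s v"] swap_in_twin swap_C[OF swap A D(1)] assms by auto
  then have "s ` \<tau> (s v) \<subseteq> N v"
    using swap_image_nbhd[OF swap A D(1), of "s v"] by auto
  with True show ?thesis
    unfolding extend_by_swap_def by simp
next
  case False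
  then show ?thesis
    using nc_teaching_subset[OF \<tau>, of v] assms closed_nbhd_Diff[of v A V E]
    unfolding extend_by_swap_def by auto
qed

lemma N_del_ne_nbhd_swap:
  assumes "u \<in> A" "v \<notin> A" "v \<in> X"
  shows "N_del A v \<noteq> N (s u)"
proof
  assume eq: "N_del A v = N (s u)"
  obtain l where l: "l \<in> DD" "l \<noteq> A" "l \<noteq> D"
    using exists_other_of_card_ge_3[OF three] by metis
  have "s u \<in> N v"
    using eq closed_nbhd_self[of "s u"] closed_nbhd_Diff[OF assms(2)] by blast
  then have "N v \<inter> l \<noteq> {}"
    using nbhd_meets_twin[OF assms(3) D(1) l(1)] swap_in_twin(1)[OF assms(1)] by blast
  then obtain e where "e \<in> N v" "e \<in> l"
    by blast
  then have "e \<in> N (s u)"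
    using eq closed_nbhd_Diff[OF assms(2)] twins_disjoint[OF l(1) A l(2)] by blast
  then show False
    using nbhd_twin_subset[OF D(1) swap_in_twin(1)[OF assms(1)]] twins_disjoint[OF l(1) D(1) l(3)]
      twin_subset[OF l(1)] \<open>e \<in> l\<close> by blast
qed

lemma extend_by_swap_separates_outside_X:
  assumes u: "u \<in> A \<inter> C" and v: "v \<in> C - A" "v \<notin> X"
  shows "\<exists>w\<in>extend_by_swap s A \<tau> u. w \<in> N u \<and> w \<notin> N v"
proof -
  obtain e where e: "e \<in> \<tau> (s u)" "e \<notin> X"
    using outside_X[OF u] by blast
  have "s u \<in> C - A"
    using swap_in_twin swap_C[OF swap A D(1)] u by auto
  then have "e \<in> N (s u)"
    using nc_teaching_subset[OF \<tau>] e(1) swap_in_twin(3) u by auto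
  then have "e \<in> D"
    using nbhd_twin_subset[OF D(1) swap_in_twin(1)] u e(2) by blast
  have "s e \<in> extend_by_swap s A \<tau> u"
    using u e(1) unfolding extend_by_swap_def by auto
  moreover have "s e \<in> N u"
    using swap_mem_nbhd[OF swap A D(1), of e "s u"] \<open>e \<in> N (s u)\<close> by simp
  moreover have "s e \<notin> N v"
    using nbhd_inter_twin[OF A v(2)] v(1) swap_mem_A[OF swap A D(1)] \<open>e \<in> D\<close> by blast
  ultimately show ?thesis
    by blast
qed

lemma extend_by_swap_separates_X:
  assumes u: "u \<in> A \<inter> C" and v: "v \<in> C - A" "v \<in> X"
  shows "\<exists>w\<in>extend_by_swap s A \<tau> u \<union> extend_by_swap s A \<tau> v. (w \<in> N u) \<noteq> (w \<in> N v)"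
proof -
  have su: "s u \<in> C - A" "N_del A (s u) = N (s u)"
    using swap_in_twin swap_C[OF swap A D(1)] u by auto
  have Nv: "N_del A v = N v - A"
    using v(1) by (simp add: closed_nbhd_Diff)
  obtain w where w: "w \<in> \<tau> v \<union> \<tau> (s u)" "(w \<in> N_del A v) \<noteq> (w \<in> N (s u))"
    using nc_teachingD[OF \<tau> v(1) su(1)] N_del_ne_nbhd_swap[of u v] su(2) u v by auto
  show ?thesis
  proof (cases "w \<in> \<tau> (s u)")
    case True
    then have "w \<in> N (s u)"
      using nc_teaching_subset[OF \<tau> su(1)] su(2) by blast
    then have "w \<notin> A"
      using nbhd_twin_subset[OF D(1) swap_in_twin(1)] twins_disjoint[OF A D(1)] D(2) u
        twin_subset[OF A] by blast
    then have "(s w \<in> N u) \<noteq> (s w \<in> N v)"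
      using w(2) Nv swap_mem_nbhd_X[OF swap A D(1) v(2)] swap_mem_nbhd[OF swap A D(1), of w "s u"]
      by simp
    moreover have "s w \<in> extend_by_swap s A \<tau> u"
      using True u unfolding extend_by_swap_def by auto
    ultimately show ?thesis
      by blast
  next
    case False
    then have "w \<in> \<tau> v"
      using w(1) by blast
    then have "w \<in> N v" "w \<notin> A" "w \<notin> N (s u)"
      using nc_teaching_subset[OF \<tau> v(1)] Nv w(2) by auto
    moreover have "w \<notin> N u"
      using mem_nbhd_swap_X[OF swap A D(1), of w u] nbhd_twin_subset[OF A, of u] u calculation
      by (cases "w \<in> X") auto
    moreover have "w \<in> extend_by_swap s A \<tau> v"
      using \<open>w \<in> \<tau> v\<close> v(1) unfolding extend_by_swap_def by simp
    ultimately show ?thesis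
      by blast
  qed
qed

lemma extend_by_swap_separates_A:
  assumes v: "v1 \<in> A \<inter> C" "v2 \<in> A \<inter> C" and ne: "N v1 \<noteq> N v2"
  shows "\<exists>w\<in>extend_by_swap s A \<tau> v1 \<union> extend_by_swap s A \<tau> v2. (w \<in> N v1) \<noteq> (w \<in> N v2)"
proof -
  have sv: "s v1 \<in> C - A" "s v2 \<in> C - A" "N_del A (s v1) = N (s v1)" "N_del A (s v2) = N (s v2)"
    using swap_in_twin swap_C[OF swap A D(1)] v by auto
  have "N (s v1) \<noteq> N (s v2)"
    using ne swap_image_nbhd[OF swap A D(1), of "s v1"] swap_image_nbhd[OF swap A D(1), of "s v2"]
    by auto
  then obtain w where w: "w \<in> \<tau> (s v1) \<union> \<tau> (s v2)" "(w \<in> N (s v1)) \<noteq> (w \<in> N (s v2))"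
    using nc_teachingD[OF \<tau> sv(1,2)] sv(3,4) by auto
  have "s w \<in> extend_by_swap s A \<tau> v1 \<union> extend_by_swap s A \<tau> v2"
    using w(1) v unfolding extend_by_swap_def by auto
  moreover have "(s w \<in> N v1) \<noteq> (s w \<in> N v2)"
    using w(2) swap_mem_nbhd[OF swap A D(1), of w "s v1"] swap_mem_nbhd[OF swap A D(1), of w "s v2"]
    by simp
  ultimately show ?thesis
    by blast
qed

lemma extend_by_swap_separates_mixed:
  assumes "u \<in> A \<inter> C" "v \<in> C - A"
  shows "\<exists>w\<in>extend_by_swap s A \<tau> u \<union> extend_by_swap s A \<tau> v. (w \<in> N u) \<noteq> (w \<in> N v)"
  using extend_by_swap_separates_outside_X[OF assms] extend_by_swap_separates_X[OF assms]
  by (cases "v \<in> X") blast+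

lemma extend_by_swap_separates_outside_A:
  assumes v: "v1 \<in> C - A" "v2 \<in> C - A" and ne: "N v1 \<noteq> N v2"
  shows "\<exists>w\<in>extend_by_swap s A \<tau> v1 \<union> extend_by_swap s A \<tau> v2. (w \<in> N v1) \<noteq> (w \<in> N v2)"
proof -
  have N_del: "N_del A v1 = N v1 - A" "N_del A v2 = N v2 - A"
    using v by (simp_all add: closed_nbhd_Diff)
  have "N v1 - A \<noteq> N v2 - A"
    using nbhd_eq_if_Diff_twin_eq[OF three A] v ne by blast
  then obtain w where w: "w \<in> \<tau> v1 \<union> \<tau> v2" "(w \<in> N v1 - A) \<noteq> (w \<in> N v2 - A)"
    using nc_teachingD[OF \<tau> v] N_del by auto
  moreover have "w \<notin> A"
    using w(1) nc_teaching_subset[OF \<tau> v(1)] nc_teaching_subset[OF \<tau> v(2)] N_del by blast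
  ultimately show ?thesis
    using v unfolding extend_by_swap_def by auto
qed

lemma nc_teaching_extend_by_swap: "nc_teaching N C (extend_by_swap s A \<tau>)"
  unfolding nc_teaching_def
proof (intro conjI ballI impI)
  fix v assume "v \<in> C"
  then show "extend_by_swap s A \<tau> v \<subseteq> N v"
    by (rule extend_by_swap_subset)
next
  fix v1 v2 assume v: "v1 \<in> C" "v2 \<in> C" and ne: "N v1 \<noteq> N v2"
  let ?T = "extend_by_swap s A \<tau>"
  consider "v1 \<in> A" "v2 \<in> A" | "v1 \<in> A" "v2 \<notin> A" | "v1 \<notin> A" "v2 \<in> A" | "v1 \<notin> A" "v2 \<notin> A"
    by blast
  then show "\<exists>w\<in>?T v1 \<union> ?T v2. (w \<in> N v1) \<noteq> (w \<in> N v2)"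
  proof cases
    case 3
    then obtain w where "w \<in> ?T v2 \<union> ?T v1" "(w \<in> N v2) \<noteq> (w \<in> N v1)"
      using extend_by_swap_separates_mixed[of v2 v1] v by blast
    then show ?thesis
      by auto
  qed (use extend_by_swap_separates_A extend_by_swap_separates_mixed
      extend_by_swap_separates_outside_A ne v in blast)+
qed

end

lemma teachable_add_twin:
  assumes "teachable (N_del A) (C - A) k" "A \<in> DD" "card A + 2 \<le> card DD" "3 \<le> card DD"
  shows "teachable N C k"
proof -
  obtain \<tau> where \<tau>: "nc_teaching (N_del A) (C - A) \<tau>" "\<forall>v\<in>C - A. card (\<tau> v) \<le> k"
    using assms(1) unfolding teachable_def by blast
  obtain D s where D: "D \<in> DD" "D \<noteq> A" and s: "twin_swap E C A D s"
    and outside_X: "\<And>u. u \<in> A \<inter> C \<Longrightarrow> \<not> \<tau> (s u) \<subseteq> X"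
    using exists_twin_taught_outside_X[OF \<tau>(1) assms(2,3)] by metis
  have "card (extend_by_swap s A \<tau> v) \<le> k" if "v \<in> C" for v
  proof (cases "v \<in> A")
    case True
    then have "s v \<in> C - A"
      using swap_in_twin[OF \<tau>(1) assms(2) D s assms(4) outside_X] swap_C[OF s assms(2) D(1)] that
      by auto
    then show ?thesis
      using True \<tau>(2) card_image[OF inj_on_subset[OF inj_swap[OF s assms(2) D(1)]]]
      unfolding extend_by_swap_def by simp
  qed (use \<tau>(2) that in \<open>simp add: extend_by_swap_def\<close>)
  then show ?thesis
    using nc_teaching_extend_by_swap[OF \<tau>(1) assms(2) D s assms(4) outside_X]
    unfolding teachable_def by blast
qed

lemma NCTD_pos_remove_twin:
  assumes big: "2 * card X + t + 1 < card DD" and small: "\<forall>A\<in>DD. card A \<le> t"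
  shows "\<exists>A\<in>DD. NCTD_pos (N ` C) \<le> k \<longleftrightarrow> NCTD_pos (N_del A ` (C - A)) \<le> k"
proof -
  from big have "DD \<noteq> {}"
    by auto
  then obtain A0 where A0: "A0 \<in> DD"
    by blast
  then have "1 \<le> card A0"
    using card_component_pos[OF finite_Diff[OF finite_V] twin_component] by (simp add: Suc_le_eq)
  then have A0_small: "card A0 + 2 \<le> card DD" and three: "3 \<le> card DD"
    using small A0 big by fastforce+
  have finite_C: "finite C" "finite (C - A)" for A
    using finite_V C_subset finite_subset by blast+
  have NCTD_iff: "NCTD_pos (N ` C) \<le> k \<longleftrightarrow> teachable N C k"
    by (rule NCTD_pos_image_le_iff[OF finite_C(1) finite_closed_nbhd[OF finite_V]])
  have NCTD_del_iff: "NCTD_pos (N_del A ` (C - A)) \<le> k \<longleftrightarrow> teachable (N_del A) (C - A) k" for A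
    by (rule NCTD_pos_image_le_iff[OF finite_C(2) finite_closed_nbhd[OF finite_Diff[OF finite_V]]])
  show ?thesis
  proof (cases "teachable N C k")
    case True
    moreover have "2 * card X < card DD"
      using big by linarith
    ultimately obtain A where "A \<in> DD" "teachable (N_del A) (C - A) k"
      using teachable_remove_twin three by blast
    then show ?thesis
      using True NCTD_iff NCTD_del_iff by blast
  next
    case False
    then have "\<not> teachable (N_del A0) (C - A0) k"
      using teachable_add_twin[OF _ A0 A0_small three] by blast
    then show ?thesis
      using False A0 NCTD_iff NCTD_del_iff by blast
  qed
qed

end

theorem lemma2:
  fixes V :: "'a set" and E :: "'a \<Rightarrow> 'a \<Rightarrow> bool"
    and C X :: "'a set" and \<A> :: "'a set set" and k :: nat
  assumes "simple_graph V E"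
    and "C \<subseteq> V"
    and "0 < k"
    and "X \<subseteq> V"
    and "\<A> \<subseteq> components_of (V - X) E"
    and "card \<A> > (card X + Max (card ` \<A>)) * 2 ^ ((card X + Max (card ` \<A>))\<^sup>2)
                    * 2 ^ (2 * Max (card ` \<A>) + card X + 1)"
  shows "\<exists>Ai\<in>\<A>.
           NCTD_pos (closed_nbhd V E ` C) \<le> k \<longleftrightarrow>
           NCTD_pos (closed_nbhd (V - Ai) E ` (C - Ai)) \<le> k"
proof -
  \<comment> \<open>The argument works for every \<open>k\<close>.\<close>
  have "finite \<A>"
    using assms(6) card.infinite not_less_zero by metis
  then have "\<forall>A\<in>\<A>. card A \<le> Max (card ` \<A>)"
    by simp
  then obtain DD where DD: "DD \<subseteq> \<A>" "2 * card X + Max (card ` \<A>) + 1 < card DD"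
    and twins: "\<forall>A\<in>DD. \<forall>D\<in>DD. A \<noteq> D \<longrightarrow> (\<exists>s. twin_swap E C A D s)"
    using exists_large_twin_class[OF assms(1,4,5) _ assms(6)] by blast
  interpret twin_components V E C X DD
    using assms(1,2,4,5) DD(1) twins by unfold_locales blast+
  obtain A where "A \<in> DD" "NCTD_pos (N ` C) \<le> k \<longleftrightarrow> NCTD_pos (N_del A ` (C - A)) \<le> k"
    using NCTD_pos_remove_twin[OF DD(2)] \<open>\<forall>A\<in>\<A>. card A \<le> Max (card ` \<A>)\<close> DD(1) by blast
  then show ?thesis
    using DD(1) by blast
qed

end
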